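(* Let $\mathcal{H}$ be a complex Hilbert space and $T\in\mathbb{B}(\mathcal{H})$. Then $$\Omega(T) \leq \min\left\{\sqrt{\|TT^* + T^*T\|},\ \sqrt{\|T\|^2 + w(T^2)}\right\}.$$
   Context: $\mathbb{B}(\mathcal{H})$ is the algebra of bounded linear operators on $\mathcal{H}$, $\|\cdot\|$ the usual operator norm, and $w(T)=\sup\{|\langle Tx,x\rangle|:\|x\|=1\}$ the numerical radius. Dragomir's norm is $\Omega(T)=\sup\{\|\zeta T+\eta T^*\|:\ \zeta,\eta\in\mathbb{C},\ |\zeta|^2+|\eta|^2\le 1\}$. *)

theory Defs
  imports "HOL-Analysis.Analysis"
begin

text \<open>Complex Hilbert spaces (not available in the distribution library):
  a Banach space with a complex scalar multiplication compatible with the real one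
  and a complex inner product (linear in the second argument) inducing the norm.\<close>

class chilbert_space = banach +
  fixes scaleC :: "complex \<Rightarrow> 'a \<Rightarrow> 'a" (infixr "*\<^sub>C" 75)
    and cinner :: "'a \<Rightarrow> 'a \<Rightarrow> complex"
  assumes scaleC_add_right: "a *\<^sub>C (x + y) = a *\<^sub>C x + a *\<^sub>C y"
    and scaleC_add_left: "(a + b) *\<^sub>C x = a *\<^sub>C x + b *\<^sub>C x"
    and scaleC_scaleC: "a *\<^sub>C (b *\<^sub>C x) = (a * b) *\<^sub>C x"
    and scaleC_one: "1 *\<^sub>C x = x"
    and scaleR_scaleC: "scaleR r x = complex_of_real r *\<^sub>C x"
    and cinner_commute: "cinner x y = cnj (cinner y x)"
    and cinner_add_right: "cinner x (y + z) = cinner x y + cinner x z"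
    and cinner_scaleC_right: "cinner x (a *\<^sub>C y) = a * cinner x y"
    and cinner_nonneg: "0 \<le> Re (cinner x x)"
    and cinner_eq_zero_iff: "cinner x x = 0 \<longleftrightarrow> x = 0"
    and norm_eq_sqrt_cinner: "norm x = sqrt (Re (cinner x x))"

definition bounded_clinear_op :: "('a::chilbert_space \<Rightarrow> 'a) \<Rightarrow> bool" where
  "bounded_clinear_op T \<longleftrightarrow>
     (\<forall>x y. T (x + y) = T x + T y) \<and> (\<forall>a x. T (a *\<^sub>C x) = a *\<^sub>C T x) \<and>
     (\<exists>K. \<forall>x. norm (T x) \<le> norm x * K)"

definition is_adjoint :: "('a::chilbert_space \<Rightarrow> 'a) \<Rightarrow> ('a \<Rightarrow> 'a) \<Rightarrow> bool" where
  "is_adjoint T S \<longleftrightarrow> (\<forall>x y. cinner (T x) y = cinner x (S y))"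

definition numrad :: "('a::chilbert_space \<Rightarrow> 'a) \<Rightarrow> real" where
  "numrad T = Sup (insert 0 ((\<lambda>x. cmod (cinner (T x) x)) ` {x. norm x = 1}))"

definition dragomir :: "('a::chilbert_space \<Rightarrow> 'a) \<Rightarrow> ('a \<Rightarrow> 'a) \<Rightarrow> real" where
  "dragomir T Ts = (SUP p \<in> {(z, e). (cmod z)\<^sup>2 + (cmod e)\<^sup>2 \<le> 1}.
      onorm (\<lambda>x. fst p *\<^sub>C T x + snd p *\<^sub>C Ts x))"

end

theory Submission
  imports Defs
begin

(* For (cmod z)^2 + (cmod e)^2 <= 1, expanding the square and using <T x, T* x> = <T^2 x, x> gives
     ||z T x + e T* x||^2 <= |z|^2 ||T x||^2 + |e|^2 ||T* x||^2 + 2 |z| |e| |<T^2 x, x>|.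
   Bounding |<T^2 x, x>| by ||T x|| ||T* x|| and applying Cauchy-Schwarz in the plane leaves
   ||T x||^2 + ||T* x||^2 = Re <(T T* + T* T) x, x> <= ||T T* + T* T|| ||x||^2.
   Bounding it instead by w(T^2) ||x||^2 and using 2 |z| |e| <= 1 and ||T*|| <= ||T|| leaves
   (||T||^2 + w(T^2)) ||x||^2.  Taking the supremum over x and (z, e) gives both bounds. *)

lemma cinner_add_left: "cinner (x + y) (z::'a::chilbert_space) = cinner x z + cinner y z"
  by (metis cinner_add_right cinner_commute complex_cnj_add)

lemma cinner_scaleC_left: "cinner (a *\<^sub>C x) (y::'a::chilbert_space) = cnj a * cinner x y"
  by (metis cinner_commute cinner_scaleC_right complex_cnj_mult)

lemma cinner_zero_right [simp]: "cinner x (0::'a::chilbert_space) = 0"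
  using cinner_add_right[of x 0 0] by simp

lemma cinner_diff_right: "cinner x (u - v::'a::chilbert_space) = cinner x u - cinner x v"
  using cinner_add_right[of x "u - v" v] by simp

lemma cinner_self: "cinner x (x::'a::chilbert_space) = complex_of_real ((norm x)\<^sup>2)"
proof -
  have "Im (cinner x x) = 0"
    using arg_cong[OF cinner_commute[of x x], of Im] by simp
  moreover have "Re (cinner x x) = (norm x)\<^sup>2"
    using norm_eq_sqrt_cinner[of x] cinner_nonneg[of x] by simp
  ultimately show ?thesis by (simp add: complex_eq_iff)
qed

lemma cinner_eqI: "(\<And>z. cinner z u = cinner z v) \<Longrightarrow> u = (v::'a::chilbert_space)"
  using cinner_eq_zero_iff[of "u - v"] by (simp add: cinner_diff_right)

lemma norm_scaleC_add_power2:
  fixes u v :: "'a::chilbert_space"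
  shows "(norm (z *\<^sub>C u + e *\<^sub>C v))\<^sup>2 =
    (cmod z)\<^sup>2 * (norm u)\<^sup>2 + (cmod e)\<^sup>2 * (norm v)\<^sup>2 + 2 * Re (cnj z * e * cinner u v)"
proof -
  have "complex_of_real ((norm (z *\<^sub>C u + e *\<^sub>C v))\<^sup>2) =
      cinner (z *\<^sub>C u + e *\<^sub>C v) (z *\<^sub>C u + e *\<^sub>C v)"
    by (rule cinner_self[symmetric])
  also have "\<dots> = z * cnj z * cinner u u + e * cnj e * cinner v v
      + (cnj z * e * cinner u v + cnj (cnj z * e * cinner u v))"
    by (simp add: cinner_add_left cinner_add_right cinner_scaleC_left
        cinner_scaleC_right cinner_commute[of v u] algebra_simps)
  also have "\<dots> = complex_of_real ((cmod z)\<^sup>2 * (norm u)\<^sup>2 + (cmod e)\<^sup>2 * (norm v)\<^sup>2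
      + 2 * Re (cnj z * e * cinner u v))"
    by (simp only: complex_norm_square[symmetric] complex_add_cnj cinner_self of_real_add of_real_mult)
  finally show ?thesis
    using of_real_eq_iff by blast
qed

lemma norm_cinner_le: "cmod (cinner x y) \<le> norm x * norm (y::'a::chilbert_space)"
proof (cases "y = 0")
  case True
  then show ?thesis by simp
next
  case False
  define n where "n = (norm y)\<^sup>2"
  define c where "c = cinner x y"
  have n: "n > 0"
    using False by (simp add: n_def)
  \<comment> \<open>x - (cnj c / n) y is the residue of x after projecting onto y\<close>
  have "0 \<le> (norm (1 *\<^sub>C x + (- cnj c / n) *\<^sub>C y))\<^sup>2"
    by simp
  also have "\<dots> = (norm x)\<^sup>2 - (cmod c)\<^sup>2 / n"
    using n unfolding norm_scaleC_add_power2 c_def[symmetric] n_def[symmetric]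
    by (simp add: norm_divide power_divide complex_norm_square[symmetric] power2_eq_square
        field_simps)
  finally have "(cmod c)\<^sup>2 \<le> (norm x * norm y)\<^sup>2"
    using n by (simp add: n_def field_simps power_mult_distrib)
  then show ?thesis
    by (simp add: c_def power2_le_iff_abs_le)
qed

lemma bounded_clinear_op_imp_bounded_linear:
  "bounded_clinear_op T \<Longrightarrow> bounded_linear T"
  unfolding bounded_clinear_op_def by (metis bounded_linear_intro scaleR_scaleC)

lemma is_adjoint_add: "is_adjoint T Ts \<Longrightarrow> Ts (x + y) = Ts x + Ts y"
  unfolding is_adjoint_def
  by (rule cinner_eqI) (metis cinner_add_right)

lemma is_adjoint_scaleC: "is_adjoint T Ts \<Longrightarrow> Ts (a *\<^sub>C x) = a *\<^sub>C Ts x"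
  unfolding is_adjoint_def
  by (rule cinner_eqI) (metis cinner_scaleC_right)

lemma is_adjoint_norm_le:
  assumes T: "bounded_linear T" and adj: "is_adjoint T Ts"
  shows "norm (Ts y) \<le> onorm T * norm y"
proof -
  have "(norm (Ts y))\<^sup>2 = Re (cinner (T (Ts y)) y)"
    using adj by (simp add: is_adjoint_def cinner_self)
  also have "\<dots> \<le> norm (T (Ts y)) * norm y"
    by (meson complex_Re_le_cmod norm_cinner_le order_trans)
  also have "\<dots> \<le> onorm T * norm (Ts y) * norm y"
    by (simp add: mult_right_mono onorm[OF T])
  finally have "norm (Ts y) * norm (Ts y) \<le> (onorm T * norm y) * norm (Ts y)"
    by (simp add: power2_eq_square algebra_simps)
  then show ?thesis
    using onorm_pos_le[OF T] by (cases "Ts y = 0") auto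
qed

lemma is_adjoint_bounded_linear:
  "bounded_linear T \<Longrightarrow> is_adjoint T Ts \<Longrightarrow> bounded_linear Ts"
  by (rule bounded_linear_intro[of _ "onorm T"])
    (simp_all add: is_adjoint_add is_adjoint_scaleC scaleR_scaleC is_adjoint_norm_le mult.commute)

lemma is_adjoint_bounded_linear_sum:
  assumes T: "bounded_linear T" and adj: "is_adjoint T Ts"
  shows "bounded_linear (\<lambda>x. T (Ts x) + Ts (T x))"
proof -
  have Ts: "bounded_linear Ts"
    using T adj by (rule is_adjoint_bounded_linear)
  show ?thesis
    by (rule bounded_linear_add[OF bounded_linear_compose[OF T Ts] bounded_linear_compose[OF Ts T]])
qed

lemma bdd_above_numrad:
  assumes "bounded_linear A"
  shows "bdd_above (insert 0 ((\<lambda>x. cmod (cinner (A x) x)) ` {x::'a::chilbert_space. norm x = 1}))"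
proof (rule bdd_aboveI[of _ "onorm A"])
  have "cmod (cinner (A x) x) \<le> onorm A" if "norm x = 1" for x
    using norm_cinner_le[of "A x" x] onorm[OF assms, of x] that by simp
  then show "r \<le> onorm A" if "r \<in> insert 0 ((\<lambda>x. cmod (cinner (A x) x)) ` {x. norm x = 1})" for r
    using that onorm_pos_le[OF assms] by auto
qed

lemma numrad_nonneg: "bounded_linear A \<Longrightarrow> 0 \<le> numrad A"
  unfolding numrad_def by (rule cSup_upper[OF _ bdd_above_numrad]) auto

lemma norm_cinner_le_numrad:
  fixes x :: "'a::chilbert_space"
  assumes A: "bounded_linear A"
  shows "cmod (cinner (A x) x) \<le> numrad A * (norm x)\<^sup>2"
proof (cases "x = 0")
  case True
  then show ?thesis
    using linear_0[OF bounded_linear.linear[OF A]] by simp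
next
  case False
  define r where "r = 1 / norm x"
  have "cinner (A (r *\<^sub>R x)) (r *\<^sub>R x) = complex_of_real (r\<^sup>2) * cinner (A x) x"
    unfolding linear_scale[OF bounded_linear.linear[OF A]]
    by (simp add: scaleR_scaleC cinner_scaleC_left
        cinner_scaleC_right power2_eq_square)
  moreover have "cmod (cinner (A (r *\<^sub>R x)) (r *\<^sub>R x)) \<le> numrad A"
    unfolding numrad_def using False
    by (intro cSup_upper[OF _ bdd_above_numrad[OF A]]) (simp add: r_def)
  ultimately have "r\<^sup>2 * cmod (cinner (A x) x) \<le> numrad A"
    by (simp add: norm_mult norm_power)
  then show ?thesis
    using False by (simp add: r_def field_simps)
qed

lemma dragomir_le_sqrt:
  assumes "0 \<le> M"
    and "\<And>z e x. (cmod z)\<^sup>2 + (cmod e)\<^sup>2 \<le> 1 \<Longrightarrow>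
      (norm (z *\<^sub>C T x + e *\<^sub>C Ts x))\<^sup>2 \<le> M * (norm x)\<^sup>2"
  shows "dragomir T Ts \<le> sqrt M"
  unfolding dragomir_def
proof (rule cSUP_least)
  show "{(z, e). (cmod z)\<^sup>2 + (cmod e)\<^sup>2 \<le> 1} \<noteq> {}"
    by (auto intro!: exI[of _ 0])
next
  fix p :: "complex \<times> complex"
  assume "p \<in> {(z, e). (cmod z)\<^sup>2 + (cmod e)\<^sup>2 \<le> 1}"
  then have "(norm (fst p *\<^sub>C T x + snd p *\<^sub>C Ts x))\<^sup>2 \<le> (sqrt M * norm x)\<^sup>2" for x
    using assms by (auto simp: power_mult_distrib)
  then show "onorm (\<lambda>x. fst p *\<^sub>C T x + snd p *\<^sub>C Ts x) \<le> sqrt M"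
    using assms(1) by (intro onorm_bound) (auto intro: power2_le_imp_le)
qed

lemma is_adjoint_combination_power2_le:
  assumes "is_adjoint T Ts"
  shows "(norm (z *\<^sub>C T x + e *\<^sub>C Ts x))\<^sup>2 \<le> (cmod z)\<^sup>2 * (norm (T x))\<^sup>2
    + (cmod e)\<^sup>2 * (norm (Ts x))\<^sup>2 + 2 * (cmod z * cmod e * cmod (cinner (T (T x)) x))"
proof -
  have "cinner (T x) (Ts x) = cinner (T (T x)) x"
    using assms by (simp add: is_adjoint_def)
  then have "Re (cnj z * e * cinner (T x) (Ts x)) \<le> cmod z * cmod e * cmod (cinner (T (T x)) x)"
    using complex_Re_le_cmod[of "cnj z * e * cinner (T (T x)) x"] by (simp add: norm_mult)
  then show ?thesis
    unfolding norm_scaleC_add_power2 by simp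
qed

lemma norm_power2_add_adjoint_le_onorm:
  assumes T: "bounded_linear T" and adj: "is_adjoint T Ts"
  shows "(norm (T x))\<^sup>2 + (norm (Ts x))\<^sup>2 \<le> onorm (\<lambda>x. T (Ts x) + Ts (T x)) * (norm x)\<^sup>2"
proof -
  let ?S = "\<lambda>x. T (Ts x) + Ts (T x)"
  have S: "bounded_linear ?S"
    using T adj by (rule is_adjoint_bounded_linear_sum)
  have "cinner (Ts (T x)) x = cnj (cinner (T x) (T x))" "cinner (T (Ts x)) x = cinner (Ts x) (Ts x)"
    using adj cinner_commute[of "Ts (T x)" x] by (simp_all add: is_adjoint_def)
  then have "(norm (T x))\<^sup>2 + (norm (Ts x))\<^sup>2 = Re (cinner (Ts (T x)) x + cinner (T (Ts x)) x)"
    by (simp add: cinner_self)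
  also have "\<dots> = Re (cinner (?S x) x)"
    by (simp add: cinner_add_left add.commute)
  also have "\<dots> \<le> norm (?S x) * norm x"
    using complex_Re_le_cmod norm_cinner_le order_trans by blast
  also have "\<dots> \<le> onorm ?S * norm x * norm x"
    by (rule mult_right_mono[OF onorm[OF S] norm_ge_zero])
  finally show ?thesis
    by (simp only: power2_eq_square mult.assoc)
qed

lemma is_adjoint_combination_le_onorm:
  assumes T: "bounded_linear T" and adj: "is_adjoint T Ts"
    and ze: "(cmod z)\<^sup>2 + (cmod e)\<^sup>2 \<le> 1"
  shows "(norm (z *\<^sub>C T x + e *\<^sub>C Ts x))\<^sup>2 \<le> onorm (\<lambda>x. T (Ts x) + Ts (T x)) * (norm x)\<^sup>2"
proof -
  define a b where "a = norm (T x)" and "b = norm (Ts x)"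
  have "cmod (cinner (T (T x)) x) \<le> a * b"
    using adj norm_cinner_le[of "T x" "Ts x"] by (simp add: is_adjoint_def a_def b_def)
  then have "(norm (z *\<^sub>C T x + e *\<^sub>C Ts x))\<^sup>2 \<le>
      (cmod z)\<^sup>2 * a\<^sup>2 + (cmod e)\<^sup>2 * b\<^sup>2 + 2 * (cmod z * cmod e * (a * b))"
    using is_adjoint_combination_power2_le[OF adj, of z x e] unfolding a_def b_def
    by (smt (verit) mult_left_mono mult_nonneg_nonneg norm_ge_zero)
  also have "\<dots> = (cmod z * a + cmod e * b)\<^sup>2"
    by (simp add: power2_eq_square algebra_simps)
  also have "\<dots> \<le> ((cmod z)\<^sup>2 + (cmod e)\<^sup>2) * (a\<^sup>2 + b\<^sup>2)"
    using zero_le_power2[of "cmod z * b - cmod e * a"]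
    by (simp add: power2_eq_square algebra_simps)
  also have "\<dots> \<le> a\<^sup>2 + b\<^sup>2"
    using ze by (simp add: mult_left_le_one_le)
  also have "\<dots> \<le> onorm (\<lambda>x. T (Ts x) + Ts (T x)) * (norm x)\<^sup>2"
    unfolding a_def b_def by (rule norm_power2_add_adjoint_le_onorm[OF T adj])
  finally show ?thesis .
qed

lemma is_adjoint_combination_le_numrad:
  assumes T: "bounded_linear T" and adj: "is_adjoint T Ts"
    and ze: "(cmod z)\<^sup>2 + (cmod e)\<^sup>2 \<le> 1"
  shows "(norm (z *\<^sub>C T x + e *\<^sub>C Ts x))\<^sup>2 \<le>
    ((onorm T)\<^sup>2 + numrad (\<lambda>x. T (T x))) * (norm x)\<^sup>2"
proof -
  define w where "w = numrad (\<lambda>x. T (T x))"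
  have TT: "bounded_linear (\<lambda>x. T (T x))"
    using bounded_linear_compose[OF T T] .
  have "(norm (z *\<^sub>C T x + e *\<^sub>C Ts x))\<^sup>2 \<le> (cmod z)\<^sup>2 * (norm (T x))\<^sup>2
      + (cmod e)\<^sup>2 * (norm (Ts x))\<^sup>2 + 2 * (cmod z * cmod e * cmod (cinner (T (T x)) x))"
    by (rule is_adjoint_combination_power2_le[OF adj])
  also have "\<dots> \<le> (cmod z)\<^sup>2 * (onorm T * norm x)\<^sup>2
      + (cmod e)\<^sup>2 * (onorm T * norm x)\<^sup>2 + 2 * (cmod z * cmod e * (w * (norm x)\<^sup>2))"
    using onorm[OF T, of x] is_adjoint_norm_le[OF T adj, of x] norm_cinner_le_numrad[OF TT, of x]
    by (intro add_mono mult_left_mono power_mono) (simp_all add: w_def)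
  also have "\<dots> = ((cmod z)\<^sup>2 + (cmod e)\<^sup>2) * (onorm T * norm x)\<^sup>2
      + 2 * (cmod z * cmod e) * (w * (norm x)\<^sup>2)"
    by (simp add: algebra_simps)
  also have "\<dots> \<le> (onorm T * norm x)\<^sup>2 + w * (norm x)\<^sup>2"
  proof (rule add_mono)
    show "((cmod z)\<^sup>2 + (cmod e)\<^sup>2) * (onorm T * norm x)\<^sup>2 \<le> (onorm T * norm x)\<^sup>2"
      using ze by (simp add: mult_left_le_one_le)
    have "2 * (cmod z * cmod e) \<le> 1"
      using ze zero_le_power2[of "cmod z - cmod e"] unfolding power2_diff by linarith
    then show "2 * (cmod z * cmod e) * (w * (norm x)\<^sup>2) \<le> w * (norm x)\<^sup>2"
      using numrad_nonneg[OF TT] by (simp add: w_def mult_left_le_one_le)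
  qed
  finally show ?thesis
    by (simp add: w_def power_mult_distrib algebra_simps)
qed

theorem theorem3p3:
  fixes T Ts :: "'a::chilbert_space \<Rightarrow> 'a"
  assumes "bounded_clinear_op T"
    and "is_adjoint T Ts"
  shows "dragomir T Ts \<le> min (sqrt (onorm (\<lambda>x. T (Ts x) + Ts (T x))))
                             (sqrt ((onorm T)\<^sup>2 + numrad (\<lambda>x. T (T x))))"
proof -
  have T: "bounded_linear T"
    using assms(1) by (rule bounded_clinear_op_imp_bounded_linear)
  have S: "bounded_linear (\<lambda>x. T (Ts x) + Ts (T x))"
    using T assms(2) by (rule is_adjoint_bounded_linear_sum)
  have "dragomir T Ts \<le> sqrt (onorm (\<lambda>x. T (Ts x) + Ts (T x)))"
    using onorm_pos_le[OF S] is_adjoint_combination_le_onorm[OF T assms(2)]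
    by (rule dragomir_le_sqrt)
  moreover have "dragomir T Ts \<le> sqrt ((onorm T)\<^sup>2 + numrad (\<lambda>x. T (T x)))"
    using numrad_nonneg[OF bounded_linear_compose[OF T T]] is_adjoint_combination_le_numrad[OF T assms(2)]
    by (intro dragomir_le_sqrt) auto
  ultimately show ?thesis
    by simp
qed

end
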